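(* Let $A\in\mathbb C^{n\times n}$, $b\in\mathbb C^n$, and let $M, F\in\mathbb C^{n\times n}$ be nonsingular. Partition the index set $\{1,\dots,n\}$ into $m$ consecutive blocks, and write accordingly $x = (x^{(1)},\dots,x^{(m)})$, $b=(b^{(1)},\dots,b^{(m)})$, and $A = (A^{(s,q)})_{s,q=1}^m$ in block form; assume $M$ and $F$ are block diagonal with respect to this partition, with nonsingular diagonal blocks $M^{(1)},\dots,M^{(m)}$ and $F^{(1)},\dots,F^{(m)}$. Consider any sequence of subsets $\Omega_k\subseteq\{1,\dots,m\}$, $k\in\mathbb N$, such that each $s\in\{1,\dots,m\}$ belongs to $\Omega_k$ for infinitely many $k$, and any functions $\delta_s(q,k)\in\mathbb N$ ($s,q\in\{1,\dots,m\}$, $k\in\mathbb N$) with $\delta_s(q,k)\le k$ and $\lim_{k\to\infty}\delta_s(q,k)=\infty$ for all $s,q$. Given an arbitrary initial vector $x^0$, define the asynchronous alternating iteration: for each $k\in\mathbb N$ and all $s\in\{1,\dots,m\}$, \[ y^{(s),k} := x^{(s),\delta_s(s,k)} + {M^{(s)}}^{-1}\Big(b^{(s)} - \sum_{q=1}^m A^{(s,q)} x^{(q),\delta_s(q,k)}\Big), \] \[ x^{(s),k+1} := \begin{cases} y^{(s),\delta_s(s,k)} + {F^{(s)}}^{-1}\Big(b^{(s)} - \displaystyle\sum_{q=1}^m A^{(s,q)} y^{(q),\delta_s(q,k)}\Big) & \text{if } s\in\Omega_k,\\[1ex] x^{(s),k} & \text{if } s\notin\Omega_k.\end{cases} \]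 If $A$ is an $\mathsf H$-matrix and \[ \langle M\rangle - |M - A| = \langle A\rangle, \qquad \langle F\rangle - |F - A| = \langle A\rangle, \] then for every initial guess $x^0$, every such sequence $\{\Omega_k\}$ and every such delay functions $\delta_1,\dots,\delta_m$, the sequence $x^k$ converges to the solution of $Ax=b$.
   Context: For a matrix $\mathcal A$, $|\mathcal A|$ denotes the entrywise absolute value (modulus) and $\rho(\mathcal A)$ its spectral radius. Comparisons between matrices are entrywise. A square real matrix $\mathcal A$ is an $\mathsf M$-matrix if there exists $\alpha\in\mathbb R$ with $\alpha I - \mathcal A \ge 0$ (entrywise) and $\alpha > \rho(\alpha I - \mathcal A)$. The comparison matrix $\langle \mathcal A\rangle$ of a square matrix $\mathcal A$ is defined by $\langle \mathcal A\rangle_{i,i} := |\mathcal A_{i,i}|$ and $\langle \mathcal A\rangle_{i,j} := -|\mathcal A_{i,j}|$ for $i\ne j$. A square matrix $\mathcal A$ is an $\mathsf H$-matrix if its comparison matrix $\langle\mathcal A\rangle$ is an $\mathsf M$-matrix. *)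

theory Defs
  imports Jordan_Normal_Form.Spectral_Radius
begin

definition abs_mat :: "complex mat \<Rightarrow> real mat" where
  "abs_mat A = map_mat cmod A"

definition comparison_mat :: "complex mat \<Rightarrow> real mat" where
  "comparison_mat A = mat (dim_row A) (dim_col A)
     (\<lambda>(i,j). if i = j then cmod (A $$ (i,j)) else - cmod (A $$ (i,j)))"

definition M_matrix :: "real mat \<Rightarrow> bool" where
  "M_matrix B \<longleftrightarrow> square_mat B \<and>
     (\<exists>\<alpha>::real.
        (\<forall>i < dim_row B. \<forall>j < dim_col B. (\<alpha> \<cdot>\<^sub>m 1\<^sub>m (dim_row B) - B) $$ (i,j) \<ge> 0) \<and>
        \<alpha> > spectral_radius (map_mat complex_of_real (\<alpha> \<cdot>\<^sub>m 1\<^sub>m (dim_row B) - B)))"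

definition H_matrix :: "complex mat \<Rightarrow> bool" where
  "H_matrix A \<longleftrightarrow> M_matrix (comparison_mat A)"

definition inv_mat :: "complex mat \<Rightarrow> complex mat" where
  "inv_mat B = (SOME C. inverts_mat B C \<and> inverts_mat C B)"

text \<open>Consecutive block partition given by boundaries p 0 = 0 < p 1 < ... < p m = n;
  block s (for s < m) is the index range {p s ..< p (Suc s)}.\<close>
definition block_partition :: "nat \<Rightarrow> nat \<Rightarrow> (nat \<Rightarrow> nat) \<Rightarrow> bool" where
  "block_partition n m p \<longleftrightarrow> p 0 = 0 \<and> p m = n \<and> (\<forall>s < m. p s < p (Suc s))"

definition blk_size :: "(nat \<Rightarrow> nat) \<Rightarrow> nat \<Rightarrow> nat" where
  "blk_size p s = p (Suc s) - p s"

definition blk_mat :: "(nat \<Rightarrow> nat) \<Rightarrow> 'a mat \<Rightarrow> nat \<Rightarrow> nat \<Rightarrow> 'a mat" where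
  "blk_mat p A s q = mat (blk_size p s) (blk_size p q) (\<lambda>(i,j). A $$ (p s + i, p q + j))"

definition blk_vec :: "(nat \<Rightarrow> nat) \<Rightarrow> 'a vec \<Rightarrow> nat \<Rightarrow> 'a vec" where
  "blk_vec p x s = vec (blk_size p s) (\<lambda>i. x $ (p s + i))"

definition blk_row_sum :: "(nat \<Rightarrow> nat) \<Rightarrow> nat \<Rightarrow> complex mat \<Rightarrow> nat \<Rightarrow> (nat \<Rightarrow> complex vec) \<Rightarrow> complex vec" where
  "blk_row_sum p m A s z = vec (blk_size p s) (\<lambda>i. \<Sum>q<m. (blk_mat p A s q *\<^sub>v z q) $ i)"

definition block_diagonal :: "(nat \<Rightarrow> nat) \<Rightarrow> nat \<Rightarrow> complex mat \<Rightarrow> bool" where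
  "block_diagonal p m M \<longleftrightarrow> (\<forall>s<m. \<forall>q<m. s \<noteq> q \<longrightarrow> blk_mat p M s q = 0\<^sub>m (blk_size p s) (blk_size p q))"

end

theory Submission
  imports Defs
begin

text \<open>
  Since \<open>A\<close> is an H-matrix, there is a positive vector \<open>u\<close> with \<open>\<langle>A\<rangle>u > 0\<close>.
  For \<open>G = M, F\<close> the splitting condition says \<open>\<langle>G\<rangle>u = |G - A|u + \<langle>A\<rangle>u\<close>, hence
  \<open>|G - A|u \<le> \<gamma>\<langle>G\<rangle>u\<close> for some \<open>\<gamma> < 1\<close>. In the weighted maximum norm
  \<open>max\<^sub>l |v\<^sub>l| / u\<^sub>l\<close>, the update of a block with the block-diagonal splitting matrix \<open>G\<close>
  then contracts the distance to the solution by the factor \<open>\<gamma>\<close>: with \<open>d\<close> the new error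
  of the block, each entry of \<open>G\<^sub>s\<^sub>s d\<close> is a row of \<open>G - A\<close> applied to the old errors, and diagonal
  dominance at the index maximising \<open>|d\<^sub>l| / u\<^sub>l\<close> bounds \<open>d\<close>.
  The same estimate with \<open>\<gamma> = 0\<close> shows that \<open>A\<close> is nonsingular.

  For the asynchronous iteration, all block errors stay below their initial maximum, since
  every delayed value is older than the current step. If from some time on all errors are
  at most \<open>D\<close>, then once all delays have passed that time the inner iterates are within
  \<open>\<gamma>D\<close>, and every block is within \<open>\<gamma>D\<close> after its next update, which comes
  because each block is updated infinitely often. Iterating gives errors below
  \<open>\<gamma>\<^sup>j\<close> times the initial bound eventually, for every \<open>j\<close>.
\<close>

section \<open>Block partitions and blocks\<close>

lemma block_partition_mono:
  assumes part: "block_partition n m p" and "s \<le> t" "t \<le> m"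
  shows "p s \<le> p t"
  using assms(2,3)
proof (induction t rule: dec_induct)
  case (step t)
  then show ?case
    using part unfolding block_partition_def by (meson Suc_le_lessD less_imp_le order_trans)
qed simp

lemma block_partition_bound:
  assumes "block_partition n m p" "q < m" "l < p (Suc q)"
  shows "l < n"
  using assms block_partition_mono[of n m p "Suc q" m] unfolding block_partition_def by auto

lemma block_partition_cover:
  assumes part: "block_partition n m p" and l: "l < n"
  obtains s where "s < m" "p s \<le> l" "l < p (Suc s)"
proof -
  define t where "t = (LEAST t. l < p t)"
  have "l < p m" using part l unfolding block_partition_def by simp
  then have t: "l < p t" "t \<le> m"
    unfolding t_def by (auto intro: LeastI Least_le)
  moreover have "t \<noteq> 0" using t part unfolding block_partition_def by (cases t) auto
  then obtain s where s: "t = Suc s" using not0_implies_Suc by blast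
  moreover have "\<not> l < p s" using s not_less_Least[of s "\<lambda>t. l < p t"] unfolding t_def by auto
  ultimately show ?thesis using that[of s] by auto
qed

lemma block_partition_disjoint:
  assumes part: "block_partition n m p" and "s < m" "q < m"
    and "l \<in> {p s..<p (Suc s)}" "l \<in> {p q..<p (Suc q)}"
  shows "s = q"
proof (rule ccontr)
  assume "s \<noteq> q"
  then consider "Suc s \<le> q" | "Suc q \<le> s" by linarith
  then show False
    using block_partition_mono[OF part, of "Suc s" q] block_partition_mono[OF part, of "Suc q" s] assms
    by cases auto
qed

lemma sum_blocks:
  assumes part: "block_partition n m p"
  shows "(\<Sum>q<m. \<Sum>l\<in>{p q..<p (Suc q)}. f l) = (\<Sum>l<n. f l)"
proof -
  have "(\<Sum>q<k. \<Sum>l\<in>{p q..<p (Suc q)}. f l) = (\<Sum>l\<in>{p 0..<p k}. f l)" if "k \<le> m" for k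
    using that
  proof (induction k)
    case (Suc k)
    have "p 0 \<le> p k" "p k \<le> p (Suc k)"
      using block_partition_mono[OF part] Suc.prems by auto
    then show ?case using Suc by (simp add: sum.atLeastLessThan_concat)
  qed simp
  from this[of m] show ?thesis
    using part unfolding block_partition_def by (simp add: atLeast0LessThan)
qed

lemma sum_blocks_single:
  assumes "s < m" and "\<And>q l. q < m \<Longrightarrow> q \<noteq> s \<Longrightarrow> l \<in> {p q..<p (Suc q)} \<Longrightarrow> g q l = 0"
  shows "(\<Sum>q<m. \<Sum>l\<in>{p q..<p (Suc q)}. g q l) = (\<Sum>l\<in>{p s..<p (Suc s)}. g s l)"
proof -
  have "(\<Sum>q<m. \<Sum>l\<in>{p q..<p (Suc q)}. g q l) = (\<Sum>q\<in>{s}. \<Sum>l\<in>{p q..<p (Suc q)}. g q l)"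
    using assms by (intro sum.mono_neutral_right) auto
  then show ?thesis by simp
qed

lemma sum_blk_size_shift:
  "(\<Sum>l<blk_size p q. f (p q + l)) = (\<Sum>l\<in>{p q..<p (Suc q)}. f l)"
  using sum.shift_bounds_nat_ivl[of f 0 "p q" "blk_size p q"]
  by (cases "p q \<le> p (Suc q)") (auto simp: blk_size_def atLeast0LessThan add.commute)

lemma blk_vec_index [simp]: "i < blk_size p s \<Longrightarrow> blk_vec p v s $ i = v $ (p s + i)"
  and blk_vec_carrier [simp]: "blk_vec p v s \<in> carrier_vec (blk_size p s)"
  and blk_vec_dim [simp]: "dim_vec (blk_vec p v s) = blk_size p s"
  unfolding blk_vec_def by simp_all

lemma blk_mat_index [simp]:
  "i < blk_size p s \<Longrightarrow> j < blk_size p q \<Longrightarrow> blk_mat p A s q $$ (i,j) = A $$ (p s + i, p q + j)"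
  and blk_mat_carrier [simp]: "blk_mat p A s q \<in> carrier_mat (blk_size p s) (blk_size p q)"
  and blk_mat_dim [simp]: "dim_row (blk_mat p A s q) = blk_size p s" "dim_col (blk_mat p A s q) = blk_size p q"
  unfolding blk_mat_def by simp_all

lemma blk_vec_eq_on_block:
  assumes "blk_vec p v s = blk_vec p w s" "l \<in> {p s..<p (Suc s)}"
  shows "v $ l = w $ l"
proof -
  have "l - p s < blk_size p s" using assms(2) unfolding blk_size_def by auto
  then show ?thesis using arg_cong[OF assms(1), of "\<lambda>x. x $ (l - p s)"] assms(2) by simp
qed

lemma blk_row_sum_index:
  assumes "i < blk_size p s"
  shows "blk_row_sum p m A s (\<lambda>q. blk_vec p (z q) q) $ i =
    (\<Sum>q<m. \<Sum>l\<in>{p q..<p (Suc q)}. A $$ (p s + i, l) * z q $ l)"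
  using assms unfolding blk_row_sum_def sum_blk_size_shift[symmetric]
  by (auto simp: scalar_prod_def atLeast0LessThan intro!: sum.cong)

lemma block_diagonal_entry_zero:
  assumes "block_diagonal p m G" "s < m" "q < m" "s \<noteq> q"
    and "j \<in> {p s..<p (Suc s)}" "l \<in> {p q..<p (Suc q)}"
  shows "G $$ (j,l) = 0"
proof -
  have "j - p s < blk_size p s" "l - p q < blk_size p q"
    using assms(5,6) unfolding blk_size_def by auto
  then have "G $$ (j,l) = blk_mat p G s q $$ (j - p s, l - p q)"
    using assms(5,6) by simp
  also have "\<dots> = 0"
    using assms \<open>j - p s < _\<close> \<open>l - p q < _\<close> unfolding block_diagonal_def by simp
  finally show ?thesis .
qed

section \<open>Comparison matrices\<close>

lemma comparison_mat_carrier [simp]: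
  "A \<in> carrier_mat n n \<Longrightarrow> comparison_mat A \<in> carrier_mat n n"
  unfolding comparison_mat_def by simp

lemma comparison_mat_index:
  "i < dim_row A \<Longrightarrow> j < dim_col A \<Longrightarrow>
    comparison_mat A $$ (i,j) = (if i = j then cmod (A $$ (i,j)) else - cmod (A $$ (i,j)))"
  unfolding comparison_mat_def by simp

lemma comparison_mat_row_sum:
  assumes "A \<in> carrier_mat k k" "i < k"
  shows "(\<Sum>l<k. comparison_mat A $$ (i,l) * w l)
    = cmod (A $$ (i,i)) * w i - (\<Sum>l\<in>{..<k} - {i}. cmod (A $$ (i,l)) * w l)"
  using assms
  by (simp add: sum.remove[of "{..<k}" i] comparison_mat_index sum_negf)

lemma comparison_mat_weighted_bound:
  fixes B :: "complex mat" and d :: "complex vec" and w :: "nat \<Rightarrow> real"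
  assumes B: "B \<in> carrier_mat k k" and d: "d \<in> carrier_vec k"
    and w: "\<forall>l<k. 0 < w l"
    and Bw: "\<forall>j<k. 0 < (\<Sum>l<k. comparison_mat B $$ (j,l) * w l)"
    and Bd: "\<forall>j<k. cmod ((B *\<^sub>v d) $ j) \<le> c * (\<Sum>l<k. comparison_mat B $$ (j,l) * w l)"
    and i: "i < k"
  shows "cmod (d $ i) \<le> c * w i"
proof -
  define ratio where "ratio l = cmod (d $ l) / w l" for l
  have "Max (ratio ` {..<k}) \<in> ratio ` {..<k}" using i by (intro Max_in) auto
  then obtain j where j: "j < k" and j_max: "ratio j = Max (ratio ` {..<k})" by auto
  define t where "t = ratio j"
  have d_le: "cmod (d $ l) \<le> t * w l" if "l < k" for l
  proof -
    have "ratio l \<le> t" unfolding t_def j_max using that by (intro Max_ge) auto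
    then show ?thesis using w that unfolding ratio_def by (simp add: divide_le_eq)
  qed
  have d_j: "cmod (d $ j) = t * w j" using w j unfolding t_def ratio_def by force
  let ?R = "{..<k} - {j}"
  have "t * (\<Sum>l<k. comparison_mat B $$ (j,l) * w l)
      = cmod (B $$ (j,j)) * cmod (d $ j) - (\<Sum>l\<in>?R. cmod (B $$ (j,l)) * (t * w l))"
    unfolding comparison_mat_row_sum[OF B j] d_j by (simp add: algebra_simps sum_distrib_left)
  also have "\<dots> \<le> cmod (B $$ (j,j) * d $ j) - (\<Sum>l\<in>?R. cmod (B $$ (j,l) * d $ l))"
    using d_le by (auto simp: norm_mult intro!: sum_mono mult_left_mono)
  also have "\<dots> \<le> cmod (B $$ (j,j) * d $ j + (\<Sum>l\<in>?R. B $$ (j,l) * d $ l))"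
    using norm_diff_ineq[of "B $$ (j,j) * d $ j" "(\<Sum>l\<in>?R. B $$ (j,l) * d $ l)"]
      norm_sum[of "\<lambda>l. B $$ (j,l) * d $ l" ?R] by simp
  also have "B $$ (j,j) * d $ j + (\<Sum>l\<in>?R. B $$ (j,l) * d $ l) = (B *\<^sub>v d) $ j"
    using B d j by (simp add: scalar_prod_def atLeast0LessThan sum.remove[of "{..<k}" j])
  also have "cmod \<dots> \<le> c * (\<Sum>l<k. comparison_mat B $$ (j,l) * w l)"
    using Bd j by blast
  finally have "t \<le> c" using Bw j by (simp add: mult_le_cancel_right)
  then show ?thesis
    using d_le[OF i] w i by (meson less_imp_le mult_right_mono order_trans)
qed

lemma comparison_mat_pos_vector_imp_det_nonzero:
  fixes A :: "complex mat"
  assumes A: "A \<in> carrier_mat n n" and u: "\<forall>l<n. 0 < u l"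
    and Au: "\<forall>j<n. 0 < (\<Sum>l<n. comparison_mat A $$ (j,l) * u l)"
  shows "det A \<noteq> 0"
proof
  assume "det A = 0"
  then obtain v where v: "v \<in> carrier_vec n" "v \<noteq> 0\<^sub>v n" and Av: "A *\<^sub>v v = 0\<^sub>v n"
    using det_0_iff_vec_prod_zero[OF A] by blast
  have "cmod (v $ i) \<le> 0 * u i" if "i < n" for i
    using Av Au by (intro comparison_mat_weighted_bound[OF A v(1) u Au _ that]) simp
  then have "v = 0\<^sub>v n" using v(1) by (intro eq_vecI) auto
  with v(2) show False ..
qed

lemma det_nonzero_imp_solvable:
  fixes A :: "'a :: field mat"
  assumes A: "A \<in> carrier_mat n n" and "det A \<noteq> 0" and b: "b \<in> carrier_vec n"
  shows "\<exists>x \<in> carrier_vec n. A *\<^sub>v x = b"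
proof -
  have "A \<in> Units (ring_mat TYPE('a) n ())" by (rule det_non_zero_imp_unit[OF assms(1,2)])
  then obtain B where B: "B \<in> carrier_mat n n" and AB: "A * B = 1\<^sub>m n"
    unfolding Units_def ring_mat_def by auto
  have "A *\<^sub>v (B *\<^sub>v b) = b"
    using A B b by (simp add: assoc_mult_mat_vec[symmetric] AB)
  then show ?thesis using B b by (intro bexI[of _ "B *\<^sub>v b"]) auto
qed

lemma comparison_mat_blk_row_sum:
  assumes part: "block_partition n m p" and G: "G \<in> carrier_mat n n"
    and G_bd: "block_diagonal p m G" and s: "s < m" and i: "i < blk_size p s"
  shows "(\<Sum>l<blk_size p s. comparison_mat (blk_mat p G s s) $$ (i,l) * u (p s + l))
    = (\<Sum>l<n. comparison_mat G $$ (p s + i, l) * u l)"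
proof -
  let ?j = "p s + i"
  have in_range: "l < n" if "q < m" "l \<in> {p q..<p (Suc q)}" for q l
    using block_partition_bound[OF part] that by auto
  have j: "?j \<in> {p s..<p (Suc s)}" using i unfolding blk_size_def by auto
  have "(\<Sum>l<blk_size p s. comparison_mat (blk_mat p G s s) $$ (i,l) * u (p s + l))
      = (\<Sum>l<blk_size p s. comparison_mat G $$ (?j, p s + l) * u (p s + l))"
  proof (intro sum.cong refl)
    fix l assume "l \<in> {..<blk_size p s}"
    then have "p s + l < n" "?j < n" using in_range[OF s] i unfolding blk_size_def by auto
    then show "comparison_mat (blk_mat p G s s) $$ (i,l) * u (p s + l)
        = comparison_mat G $$ (?j, p s + l) * u (p s + l)"
      using i \<open>l \<in> _\<close> G by (simp add: comparison_mat_index)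
  qed
  also have "\<dots> = (\<Sum>l\<in>{p s..<p (Suc s)}. comparison_mat G $$ (?j, l) * u l)"
    by (rule sum_blk_size_shift)
  also have "\<dots> = (\<Sum>q<m. \<Sum>l\<in>{p q..<p (Suc q)}. comparison_mat G $$ (?j, l) * u l)"
  proof (rule sum_blocks_single[symmetric, OF s])
    fix q l assume q: "q < m" "q \<noteq> s" and l: "l \<in> {p q..<p (Suc q)}"
    then have "?j \<noteq> l" using j block_partition_disjoint[OF part s q(1)] by blast
    then show "comparison_mat G $$ (?j, l) * u l = 0"
      using block_diagonal_entry_zero[OF G_bd s q(1) q(2)[symmetric] j l] G in_range[OF s] in_range[OF q(1) l] j
      by (simp add: comparison_mat_index)
  qed
  also have "\<dots> = (\<Sum>l<n. comparison_mat G $$ (?j, l) * u l)" by (rule sum_blocks[OF part])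
  finally show ?thesis .
qed

lemma splitting_contraction_factor:
  assumes A: "A \<in> carrier_mat n n" and G: "G \<in> carrier_mat n n"
    and split: "comparison_mat G - abs_mat (G - A) = comparison_mat A"
    and u: "\<forall>l<n. 0 < u l" and Au: "\<forall>j<n. 0 < (\<Sum>l<n. comparison_mat A $$ (j,l) * u l)"
  obtains \<gamma> where "0 \<le> \<gamma>" "\<gamma> < 1"
    "\<forall>j<n. 0 < (\<Sum>l<n. comparison_mat G $$ (j,l) * u l)"
    "\<forall>j<n. (\<Sum>l<n. cmod ((G - A) $$ (j,l)) * u l) \<le> \<gamma> * (\<Sum>l<n. comparison_mat G $$ (j,l) * u l)"
proof -
  define N where "N j = (\<Sum>l<n. cmod ((G - A) $$ (j,l)) * u l)" for j
  define Gu where "Gu j = (\<Sum>l<n. comparison_mat G $$ (j,l) * u l)" for j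
  have Gu_split: "Gu j = N j + (\<Sum>l<n. comparison_mat A $$ (j,l) * u l)" if "j < n" for j
  proof -
    have "comparison_mat G $$ (j,l) = cmod ((G - A) $$ (j,l)) + comparison_mat A $$ (j,l)"
      if "l < n" for l
      using arg_cong[OF split, of "\<lambda>X. X $$ (j,l)"] \<open>j < n\<close> that A G
      by (simp add: abs_mat_def comparison_mat_def)
    then show ?thesis unfolding Gu_def N_def by (simp add: distrib_right sum.distrib)
  qed
  have N_nonneg: "0 \<le> N j" for j unfolding N_def using u by (intro sum_nonneg) auto
  have Gu_pos: "\<forall>j<n. 0 < Gu j" using Gu_split N_nonneg Au by (metis add_nonneg_pos)
  have ratio_lt: "N j / Gu j < 1" if "j < n" for j
  proof -
    have "N j < Gu j" using Gu_split[OF that] Au that by simp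
    then show ?thesis using Gu_pos that by simp
  qed
  define \<gamma> where "\<gamma> = Max (insert 0 ((\<lambda>j. N j / Gu j) ` {..<n}))"
  have "\<gamma> \<in> insert 0 ((\<lambda>j. N j / Gu j) ` {..<n})" unfolding \<gamma>_def by (intro Max_in) auto
  then have "\<gamma> < 1" using ratio_lt by auto
  moreover have "0 \<le> \<gamma>" unfolding \<gamma>_def by (intro Max_ge) auto
  moreover have "N j \<le> \<gamma> * Gu j" if "j < n" for j
  proof -
    have "N j / Gu j \<le> \<gamma>" unfolding \<gamma>_def using that by (intro Max_ge) auto
    then show ?thesis using Gu_pos that by (simp add: divide_le_eq)
  qed
  ultimately show ?thesis using that Gu_pos unfolding N_def Gu_def by blast
qed

section \<open>Positive vectors of M-matrices\<close>

lemma pow_mat_Suc_left: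
  assumes "(A :: 'a :: semiring_1 mat) \<in> carrier_mat n n"
  shows "A ^\<^sub>m Suc k = A * A ^\<^sub>m k"
proof (induction k)
  case (Suc k)
  have "A ^\<^sub>m Suc (Suc k) = (A * A ^\<^sub>m k) * A" using Suc by simp
  also have "\<dots> = A * (A ^\<^sub>m k * A)" using assms by (intro assoc_mult_mat) auto
  finally show ?case by simp
qed (use assms in simp)

lemma pow_mat_smult:
  assumes "(A :: 'a :: comm_ring_1 mat) \<in> carrier_mat n n"
  shows "(c \<cdot>\<^sub>m A) ^\<^sub>m k = c ^ k \<cdot>\<^sub>m A ^\<^sub>m k"
proof (induction k)
  case (Suc k)
  have "(c \<cdot>\<^sub>m A) ^\<^sub>m Suc k = c ^ k \<cdot>\<^sub>m (A ^\<^sub>m k * (c \<cdot>\<^sub>m A))"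
    using Suc assms by (simp add: mult_smult_assoc_mat[of _ n n _ n])
  also have "\<dots> = c ^ Suc k \<cdot>\<^sub>m A ^\<^sub>m Suc k"
    using assms by (simp add: mult_smult_distrib[of _ n n _ n]) (auto intro!: eq_matI)
  finally show ?case .
qed (use assms in \<open>auto intro!: eq_matI\<close>)

lemma pow_mat_nonneg:
  assumes R: "(R :: real mat) \<in> carrier_mat n n" and nonneg: "\<forall>i<n. \<forall>j<n. 0 \<le> R $$ (i,j)"
    and "i < n" "j < n"
  shows "0 \<le> (R ^\<^sub>m k) $$ (i,j)"
  using assms(3,4)
proof (induction k arbitrary: j)
  case (Suc k)
  have "(R ^\<^sub>m Suc k) $$ (i,j) = (\<Sum>l<n. (R ^\<^sub>m k) $$ (i,l) * R $$ (l,j))"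
    using R Suc.prems by (simp add: scalar_prod_def atLeast0LessThan)
  also have "\<dots> \<ge> 0" using Suc nonneg by (intro sum_nonneg mult_nonneg_nonneg) auto
  finally show ?case .
qed (use R in auto)

lemma spectral_radius_nonneg:
  assumes "A \<in> carrier_mat n n" "0 < n"
  shows "0 \<le> spectral_radius A"
proof -
  obtain \<mu> where "spectral_radius A = cmod \<mu>" using spectral_radius_mem_max(1)[OF assms] by auto
  then show ?thesis by simp
qed

lemma spectral_radius_smult_le:
  assumes A: "A \<in> carrier_mat n n" and n: "0 < n" and c: "c \<noteq> 0"
  shows "spectral_radius (c \<cdot>\<^sub>m A) \<le> cmod c * spectral_radius A"
proof -
  have cA: "c \<cdot>\<^sub>m A \<in> carrier_mat n n" using A by simp
  obtain \<mu> where "eigenvalue (c \<cdot>\<^sub>m A) \<mu>" and \<rho>: "spectral_radius (c \<cdot>\<^sub>m A) = cmod \<mu>"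
    using spectral_radius_mem_max(1)[OF cA n] unfolding spectrum_def by auto
  then obtain v where v: "v \<in> carrier_vec n" "v \<noteq> 0\<^sub>v n" and ev: "(c \<cdot>\<^sub>m A) *\<^sub>v v = \<mu> \<cdot>\<^sub>v v"
    using cA unfolding eigenvalue_def eigenvector_def by auto
  have "A *\<^sub>v v = (\<mu> / c) \<cdot>\<^sub>v v"
  proof (rule eq_vecI)
    fix i assume "i < dim_vec ((\<mu> / c) \<cdot>\<^sub>v v)"
    then have i: "i < n" using v by simp
    have "c * (A *\<^sub>v v) $ i = \<mu> * v $ i"
      using arg_cong[OF ev, of "\<lambda>x. x $ i"] A v i
      by (simp add: scalar_prod_def sum_distrib_left mult.assoc)
    then show "(A *\<^sub>v v) $ i = ((\<mu> / c) \<cdot>\<^sub>v v) $ i"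
      using c i v by (simp add: field_simps)
  qed (use A v in simp)
  then have "eigenvalue A (\<mu> / c)"
    using A v unfolding eigenvalue_def eigenvector_def by auto
  then have "cmod (\<mu> / c) \<le> spectral_radius A"
    by (intro spectral_radius_mem_max(2)[OF A n]) (auto simp: spectrum_def)
  then show ?thesis using c by (simp add: \<rho> norm_divide divide_le_eq mult.commute)
qed

lemma pow_mat_tendsto_zero:
  fixes A :: "complex mat"
  assumes A: "A \<in> carrier_mat n n" and \<rho>: "spectral_radius A < 1" and ij: "i < n" "j < n"
  shows "(\<lambda>k. (A ^\<^sub>m k) $$ (i,j)) \<longlonglongrightarrow> 0"
proof -
  have n: "0 < n" using ij by simp
  \<comment> \<open>The Jordan normal form only bounds the powers of a matrix of spectral radius below 1;
    rescaling by some \<open>r\<close> between the spectral radius and 1 yields geometric decay.\<close>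
  define r where "r = (1 + spectral_radius A) / 2"
  have r: "spectral_radius A < r" "r < 1" "0 < r"
    using \<rho> spectral_radius_nonneg[OF A n] unfolding r_def by auto
  define B where "B = complex_of_real (1 / r) \<cdot>\<^sub>m A"
  have B: "B \<in> carrier_mat n n" using A unfolding B_def by simp
  have "spectral_radius B \<le> spectral_radius A / r"
    using spectral_radius_smult_le[OF A n, of "complex_of_real (1 / r)"] r
    unfolding B_def by (simp add: norm_divide)
  also have "\<dots> < 1" using r by simp
  finally obtain C where C: "\<And>k. norm_bound (B ^\<^sub>m k) C"
    using spectral_radius_jnf_norm_bound_less_1_upper_triangular[OF B] by blast
  have "A = complex_of_real r \<cdot>\<^sub>m B"
    using A r unfolding B_def by (intro eq_matI) simp_all
  then have Ak: "A ^\<^sub>m k = complex_of_real r ^ k \<cdot>\<^sub>m B ^\<^sub>m k" for k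
    using pow_mat_smult[OF B] by simp
  have "cmod ((A ^\<^sub>m k) $$ (i,j)) = r ^ k * cmod ((B ^\<^sub>m k) $$ (i,j))" for k
    using ij B r by (simp add: Ak norm_mult norm_power)
  also have "\<dots> k \<le> r ^ k * C" for k
    using C[of k] ij B r unfolding norm_bound_def by (simp add: mult_left_mono)
  finally have bound: "cmod ((A ^\<^sub>m k) $$ (i,j)) \<le> r ^ k * C" for k .
  have "(\<lambda>k. r ^ k * C) \<longlonglongrightarrow> 0"
    using r by (intro tendsto_mult_left_zero LIMSEQ_power_zero) simp
  then have "(\<lambda>k. cmod ((A ^\<^sub>m k) $$ (i,j))) \<longlonglongrightarrow> 0"
    by (rule tendsto_sandwich[rotated 3]) (auto simp: bound)
  then show ?thesis by (rule tendsto_norm_zero_cancel)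
qed

lemma pos_vector_of_pow_row_sums_less_1:
  fixes R :: "real mat"
  assumes R: "R \<in> carrier_mat n n" and nonneg: "\<forall>i<n. \<forall>j<n. 0 \<le> R $$ (i,j)"
    and K: "\<forall>i<n. (\<Sum>j<n. (R ^\<^sub>m K) $$ (i,j)) < 1"
  obtains u where "\<forall>i<n. 0 < u i" "\<forall>i<n. 0 < u i - (\<Sum>j<n. R $$ (i,j) * u j)"
proof
  define S where "S k i = (\<Sum>l<n. (R ^\<^sub>m k) $$ (i,l))" for k i
  \<comment> \<open>a truncated Neumann series for \<open>(I - R)\<^sup>-\<^sup>1\<close> applied to the all-ones vector\<close>
  define u where "u i = (\<Sum>k<K. S k i)" for i
  have S0: "S 0 i = 1" if "i < n" for i
    using that R by (simp add: S_def)
  have S_Suc: "S (Suc k) i = (\<Sum>j<n. R $$ (i,j) * S k j)" if "i < n" for k i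
  proof -
    have "S (Suc k) i = (\<Sum>l<n. \<Sum>j<n. R $$ (i,j) * (R ^\<^sub>m k) $$ (j,l))"
      unfolding S_def pow_mat_Suc_left[OF R] using that R
      by (intro sum.cong refl) (simp add: scalar_prod_def atLeast0LessThan)
    also have "\<dots> = (\<Sum>j<n. R $$ (i,j) * S k j)"
      unfolding S_def by (subst sum.swap) (simp add: sum_distrib_left)
    finally show ?thesis .
  qed
  show "\<forall>i<n. 0 < u i"
  proof (intro allI impI)
    fix i assume i: "i < n"
    have "K \<noteq> 0"
    proof
      assume "K = 0"
      then have "S 0 i < 1" using K i unfolding S_def by simp
      with S0[OF i] show False by simp
    qed
    then have "S 0 i \<le> u i" unfolding u_def S_def
      using pow_mat_nonneg[OF R nonneg i] by (intro member_le_sum sum_nonneg) auto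
    then show "0 < u i" using S0[OF i] by simp
  qed
  show "\<forall>i<n. 0 < u i - (\<Sum>j<n. R $$ (i,j) * u j)"
  proof (intro allI impI)
    fix i assume i: "i < n"
    have "(\<Sum>j<n. R $$ (i,j) * u j) = (\<Sum>k<K. S (Suc k) i)"
      unfolding u_def sum_distrib_left using i by (subst sum.swap) (simp add: S_Suc)
    then have "u i - (\<Sum>j<n. R $$ (i,j) * u j) = (\<Sum>k<K. S k i - S (Suc k) i)"
      unfolding u_def by (simp add: sum_subtractf)
    also have "\<dots> = S 0 i - S K i" by (rule sum_lessThan_telescope')
    finally show "0 < u i - (\<Sum>j<n. R $$ (i,j) * u j)"
      using S0 K i unfolding S_def by simp
  qed
qed

lemma pow_mat_row_sums_eventually_less_1:
  fixes R :: "real mat"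
  assumes R: "R \<in> carrier_mat n n" and \<rho>: "spectral_radius (map_mat complex_of_real R) < 1"
  obtains K where "\<forall>i<n. (\<Sum>j<n. (R ^\<^sub>m K) $$ (i,j)) < 1"
proof -
  have "(\<lambda>k. (map_mat complex_of_real R ^\<^sub>m k) $$ (i,j)) \<longlonglongrightarrow> 0" if "i < n" "j < n" for i j
    using R \<rho> that by (intro pow_mat_tendsto_zero[of _ n]) auto
  then have "(\<lambda>k. complex_of_real ((R ^\<^sub>m k) $$ (i,j))) \<longlonglongrightarrow> 0" if "i < n" "j < n" for i j
    using that R by (simp add: of_real_hom.mat_hom_pow[OF R, symmetric])
  then have "(\<lambda>k. (R ^\<^sub>m k) $$ (i,j)) \<longlonglongrightarrow> 0" if "i < n" "j < n" for i j
    using that tendsto_of_real_iff[where 'a=complex] by fastforce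
  then have "(\<lambda>k. \<Sum>j<n. (R ^\<^sub>m k) $$ (i,j)) \<longlonglongrightarrow> 0" if "i < n" for i
    using that tendsto_sum[of "{..<n}" "\<lambda>j k. (R ^\<^sub>m k) $$ (i,j)" "\<lambda>_. 0"] by simp
  then have "\<forall>\<^sub>F k in sequentially. \<forall>i\<in>{..<n}. (\<Sum>j<n. (R ^\<^sub>m k) $$ (i,j)) < 1"
    by (intro eventually_ball_finite ballI order_tendstoD(2)[of _ 0]) auto
  then show ?thesis using that unfolding eventually_sequentially by blast
qed

lemma M_matrix_pos_vector:
  assumes B: "B \<in> carrier_mat n n" and "M_matrix B"
  obtains u where "\<forall>i<n. 0 < u i" "\<forall>i<n. 0 < (\<Sum>j<n. B $$ (i,j) * u j)"
proof (cases "n = 0")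
  case False
  define N where "N \<alpha> = \<alpha> \<cdot>\<^sub>m 1\<^sub>m n - B" for \<alpha>
  obtain \<alpha> where N_nonneg: "\<forall>i<n. \<forall>j<n. 0 \<le> N \<alpha> $$ (i,j)"
    and \<rho>: "spectral_radius (map_mat complex_of_real (N \<alpha>)) < \<alpha>"
    using \<open>M_matrix B\<close> B unfolding M_matrix_def N_def by auto
  have N: "N \<alpha> \<in> carrier_mat n n" using B unfolding N_def by (simp add: minus_carrier_mat)
  have "0 < \<alpha>"
    using \<rho> spectral_radius_nonneg[of "map_mat complex_of_real (N \<alpha>)" n] N False by simp
  define R where "R = (1 / \<alpha>) \<cdot>\<^sub>m N \<alpha>"
  have R: "R \<in> carrier_mat n n" using N unfolding R_def by simp
  have R_nonneg: "\<forall>i<n. \<forall>j<n. 0 \<le> R $$ (i,j)"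
    using N N_nonneg \<open>0 < \<alpha>\<close> unfolding R_def by simp
  have B_R: "B $$ (i,j) = \<alpha> * ((if i = j then 1 else 0) - R $$ (i,j))" if "i < n" "j < n" for i j
    using that B \<open>0 < \<alpha>\<close> unfolding R_def N_def by (auto simp: field_simps)
  have "map_mat complex_of_real R = complex_of_real (1 / \<alpha>) \<cdot>\<^sub>m map_mat complex_of_real (N \<alpha>)"
    unfolding R_def by (auto intro!: eq_matI)
  then have "spectral_radius (map_mat complex_of_real R) \<le> spectral_radius (map_mat complex_of_real (N \<alpha>)) / \<alpha>"
    using spectral_radius_smult_le[of "map_mat complex_of_real (N \<alpha>)" n "complex_of_real (1 / \<alpha>)"]
      N False \<open>0 < \<alpha>\<close>
    by (simp add: norm_divide)
  also have "\<dots> < 1" using \<rho> \<open>0 < \<alpha>\<close> by simp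
  finally obtain K where "\<forall>i<n. (\<Sum>j<n. (R ^\<^sub>m K) $$ (i,j)) < 1"
    using pow_mat_row_sums_eventually_less_1[OF R] by blast
  then obtain u where u: "\<forall>i<n. 0 < u i" and Ru: "\<forall>i<n. 0 < u i - (\<Sum>j<n. R $$ (i,j) * u j)"
    using pos_vector_of_pow_row_sums_less_1[OF R R_nonneg] by blast
  have "(\<Sum>j<n. B $$ (i,j) * u j) = \<alpha> * (u i - (\<Sum>j<n. R $$ (i,j) * u j))" if "i < n" for i
  proof -
    have "(\<Sum>j<n. B $$ (i,j) * u j) = (\<Sum>j<n. \<alpha> * ((if i = j then u j else 0) - R $$ (i,j) * u j))"
      using that by (intro sum.cong) (auto simp: B_R algebra_simps)
    then show ?thesis using that by (simp add: sum_distrib_left[symmetric] sum_subtractf)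
  qed
  then show ?thesis using that u Ru \<open>0 < \<alpha>\<close> by simp
qed (use that in simp)

section \<open>Contraction of a block update\<close>

lemma right_inverse_inv_mat:
  assumes "invertible_mat B" "B \<in> carrier_mat k k"
  shows "inv_mat B \<in> carrier_mat k k" "B * inv_mat B = 1\<^sub>m k"
proof -
  have "\<exists>C. inverts_mat B C \<and> inverts_mat C B" using assms unfolding invertible_mat_def by auto
  then have "inverts_mat B (inv_mat B) \<and> inverts_mat (inv_mat B) B"
    unfolding inv_mat_def by (rule someI_ex)
  then have BC: "B * inv_mat B = 1\<^sub>m k" and CB: "inv_mat B * B = 1\<^sub>m (dim_row (inv_mat B))"
    using assms unfolding inverts_mat_def by auto
  show "B * inv_mat B = 1\<^sub>m k" by (fact BC)
  have "dim_col (inv_mat B) = k" using arg_cong[OF BC, of dim_col] by simp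
  moreover have "dim_row (inv_mat B) = k" using arg_cong[OF CB, of dim_col] assms by simp
  ultimately show "inv_mat B \<in> carrier_mat k k" by auto
qed

definition blk_update ::
  "(nat \<Rightarrow> nat) \<Rightarrow> nat \<Rightarrow> complex mat \<Rightarrow> complex mat \<Rightarrow> complex vec \<Rightarrow> nat \<Rightarrow> (nat \<Rightarrow> complex vec) \<Rightarrow> complex vec"
  where "blk_update p m A G b s z = blk_vec p (z s) s +
    inv_mat (blk_mat p G s s) *\<^sub>v (blk_vec p b s - blk_row_sum p m A s (\<lambda>q. blk_vec p (z q) q))"

lemma blk_update_carrier:
  assumes "invertible_mat (blk_mat p G s s)"
  shows "blk_update p m A G b s z \<in> carrier_vec (blk_size p s)"
  using right_inverse_inv_mat(1)[OF assms blk_mat_carrier] unfolding blk_update_def blk_row_sum_def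
  by (intro add_carrier_vec mult_mat_vec_carrier minus_carrier_vec) auto

lemma blk_mat_mult_blk_update:
  assumes G_ns: "invertible_mat (blk_mat p G s s)" and v: "v \<in> carrier_vec (blk_size p s)"
  shows "blk_mat p G s s *\<^sub>v (blk_update p m A G b s z - v) = blk_mat p G s s *\<^sub>v (blk_vec p (z s) s - v)
    + (blk_vec p b s - blk_row_sum p m A s (\<lambda>q. blk_vec p (z q) q))"
proof -
  let ?k = "blk_size p s"
  define Gs where "Gs = blk_mat p G s s"
  define r where "r = blk_vec p b s - blk_row_sum p m A s (\<lambda>q. blk_vec p (z q) q)"
  have Gs: "Gs \<in> carrier_mat ?k ?k" unfolding Gs_def by simp
  note Gs_inv = right_inverse_inv_mat[OF G_ns[folded Gs_def] Gs]
  have r: "r \<in> carrier_vec ?k" unfolding r_def blk_row_sum_def by simp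
  have "blk_update p m A G b s z - v = (blk_vec p (z s) s - v) + inv_mat Gs *\<^sub>v r"
    unfolding blk_update_def Gs_def[symmetric] r_def[symmetric]
    using carrier_matD(1)[OF Gs_inv(1)] r v by (intro eq_vecI) simp_all
  then show ?thesis
    using Gs Gs_inv r v unfolding Gs_def[symmetric] r_def[symmetric]
    by (simp add: mult_add_distrib_mat_vec[of Gs ?k ?k] assoc_mult_mat_vec[symmetric, of Gs ?k ?k])
qed

lemma blk_update_residual:
  assumes part: "block_partition n m p" and A: "A \<in> carrier_mat n n"
    and G_bd: "block_diagonal p m G" and s: "s < m" and G_ns: "invertible_mat (blk_mat p G s s)"
    and xs: "xs \<in> carrier_vec n" and sol: "A *\<^sub>v xs = b" and i: "i < blk_size p s"
  shows "(blk_mat p G s s *\<^sub>v (blk_update p m A G b s z - blk_vec p xs s)) $ i =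
    (\<Sum>q<m. \<Sum>l\<in>{p q..<p (Suc q)}. (G $$ (p s + i, l) - A $$ (p s + i, l)) * (z q $ l - xs $ l))"
proof -
  let ?j = "p s + i"
  have j: "?j < n" using i s part block_partition_bound unfolding blk_size_def by fastforce
  have "(blk_mat p G s s *\<^sub>v (blk_vec p (z s) s - blk_vec p xs s)) $ i
      = (\<Sum>l<blk_size p s. G $$ (?j, p s + l) * (z s $ (p s + l) - xs $ (p s + l)))"
    using i by (auto simp: scalar_prod_def atLeast0LessThan intro!: sum.cong)
  also have "\<dots> = (\<Sum>l\<in>{p s..<p (Suc s)}. G $$ (?j, l) * (z s $ l - xs $ l))"
    by (rule sum_blk_size_shift)
  also have "\<dots> = (\<Sum>q<m. \<Sum>l\<in>{p q..<p (Suc q)}. G $$ (?j, l) * (z q $ l - xs $ l))"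
    using i G_bd s block_diagonal_entry_zero[of p m G s _ ?j]
    by (intro sum_blocks_single[symmetric]) (auto simp: blk_size_def)
  moreover have "b $ ?j = (\<Sum>l<n. A $$ (?j, l) * xs $ l)"
    using sol[symmetric] A xs j by (simp add: scalar_prod_def atLeast0LessThan)
  then have "(blk_vec p b s - blk_row_sum p m A s (\<lambda>q. blk_vec p (z q) q)) $ i
      = - (\<Sum>q<m. \<Sum>l\<in>{p q..<p (Suc q)}. A $$ (?j, l) * (z q $ l - xs $ l))"
    using i unfolding sum_blocks[OF part, symmetric]
    by (simp add: blk_row_sum_index[symmetric] blk_row_sum_def right_diff_distrib sum_subtractf)
  ultimately show ?thesis
    using i unfolding blk_mat_mult_blk_update[OF G_ns blk_vec_carrier]
    by (simp add: blk_row_sum_def left_diff_distrib sum_subtractf)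
qed

lemma blk_update_residual_bound:
  assumes part: "block_partition n m p" and A: "A \<in> carrier_mat n n" and G: "G \<in> carrier_mat n n"
    and G_bd: "block_diagonal p m G" and s: "s < m" and G_ns: "invertible_mat (blk_mat p G s s)"
    and \<gamma>: "\<forall>j<n. (\<Sum>l<n. cmod ((G - A) $$ (j,l)) * u l) \<le> \<gamma> * (\<Sum>l<n. comparison_mat G $$ (j,l) * u l)"
    and xs: "xs \<in> carrier_vec n" and sol: "A *\<^sub>v xs = b"
    and D: "0 \<le> D" and err: "\<forall>q<m. \<forall>l\<in>{p q..<p (Suc q)}. cmod (z q $ l - xs $ l) \<le> D * u l"
    and i: "i < blk_size p s"
  shows "cmod ((blk_mat p G s s *\<^sub>v (blk_update p m A G b s z - blk_vec p xs s)) $ i)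
    \<le> \<gamma> * D * (\<Sum>l<n. comparison_mat G $$ (p s + i, l) * u l)"
proof -
  let ?j = "p s + i"
  have j: "?j < n" using block_partition_bound[OF part s] i unfolding blk_size_def by auto
  have in_range: "l < n" if "q < m" "l \<in> {p q..<p (Suc q)}" for q l
    using block_partition_bound[OF part] that by auto
  have "cmod ((blk_mat p G s s *\<^sub>v (blk_update p m A G b s z - blk_vec p xs s)) $ i)
      = cmod (\<Sum>q<m. \<Sum>l\<in>{p q..<p (Suc q)}. (G $$ (?j, l) - A $$ (?j, l)) * (z q $ l - xs $ l))"
    by (simp only: blk_update_residual[OF part A G_bd s G_ns xs sol i])
  also have "\<dots> \<le> (\<Sum>q<m. cmod (\<Sum>l\<in>{p q..<p (Suc q)}. (G $$ (?j, l) - A $$ (?j, l)) * (z q $ l - xs $ l)))"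
    by (rule norm_sum)
  also have "\<dots> \<le> (\<Sum>q<m. \<Sum>l\<in>{p q..<p (Suc q)}. cmod ((G $$ (?j, l) - A $$ (?j, l)) * (z q $ l - xs $ l)))"
    by (intro sum_mono norm_sum)
  also have "\<dots> \<le> (\<Sum>q<m. \<Sum>l\<in>{p q..<p (Suc q)}. cmod ((G - A) $$ (?j, l)) * (D * u l))"
    using err in_range j A G by (intro sum_mono) (auto simp: norm_mult intro: mult_left_mono)
  also have "\<dots> = D * (\<Sum>l<n. cmod ((G - A) $$ (?j, l)) * u l)"
    unfolding sum_blocks[OF part] by (simp add: sum_distrib_left algebra_simps)
  also have "\<dots> \<le> D * (\<gamma> * (\<Sum>l<n. comparison_mat G $$ (?j,l) * u l))"
    using \<gamma> j D by (intro mult_left_mono) auto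
  finally show ?thesis by (simp only: ac_simps)
qed

lemma blk_update_contraction:
  assumes part: "block_partition n m p" and A: "A \<in> carrier_mat n n" and G: "G \<in> carrier_mat n n"
    and G_bd: "block_diagonal p m G" and s: "s < m" and G_ns: "invertible_mat (blk_mat p G s s)"
    and u: "\<forall>l<n. 0 < u l"
    and Gu: "\<forall>j<n. 0 < (\<Sum>l<n. comparison_mat G $$ (j,l) * u l)"
    and \<gamma>: "\<forall>j<n. (\<Sum>l<n. cmod ((G - A) $$ (j,l)) * u l) \<le> \<gamma> * (\<Sum>l<n. comparison_mat G $$ (j,l) * u l)"
    and xs: "xs \<in> carrier_vec n" and sol: "A *\<^sub>v xs = b"
    and D: "0 \<le> D" and err: "\<forall>q<m. \<forall>l\<in>{p q..<p (Suc q)}. cmod (z q $ l - xs $ l) \<le> D * u l"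
    and i: "i < blk_size p s"
  shows "cmod (blk_update p m A G b s z $ i - xs $ (p s + i)) \<le> \<gamma> * D * u (p s + i)"
proof -
  let ?k = "blk_size p s" and ?Gs = "blk_mat p G s s"
  define d where "d = blk_update p m A G b s z - blk_vec p xs s"
  have d: "d \<in> carrier_vec ?k" unfolding d_def using blk_update_carrier[OF G_ns] by simp
  have in_blk: "p s + l < n" if "l < ?k" for l
    using block_partition_bound[OF part s] that unfolding blk_size_def by auto
  have "\<forall>j<?k. 0 < (\<Sum>l<?k. comparison_mat ?Gs $$ (j,l) * u (p s + l))"
    using Gu in_blk comparison_mat_blk_row_sum[OF part G G_bd s] by simp
  moreover have "\<forall>j<?k. cmod ((?Gs *\<^sub>v d) $ j)
      \<le> \<gamma> * D * (\<Sum>l<?k. comparison_mat ?Gs $$ (j,l) * u (p s + l))"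
    using blk_update_residual_bound[OF part A G G_bd s G_ns \<gamma> xs sol D err]
      comparison_mat_blk_row_sum[OF part G G_bd s] unfolding d_def by simp
  ultimately have "cmod (d $ i) \<le> \<gamma> * D * u (p s + i)"
    using u in_blk by (intro comparison_mat_weighted_bound[OF blk_mat_carrier d]) (auto intro: i)
  then show ?thesis using i unfolding d_def by simp
qed

definition weighted_blk_dist :: "(nat \<Rightarrow> nat) \<Rightarrow> (nat \<Rightarrow> real) \<Rightarrow> complex vec \<Rightarrow> complex vec \<Rightarrow> nat \<Rightarrow> real"
  where "weighted_blk_dist p u v w s =
    Max (insert 0 ((\<lambda>l. cmod (v $ l - w $ l) / u l) ` {p s..<p (Suc s)}))"

lemma weighted_blk_dist_nonneg: "0 \<le> weighted_blk_dist p u v w s"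
  unfolding weighted_blk_dist_def by (intro Max_ge) auto

lemma weighted_blk_dist_le_iff:
  assumes "\<forall>l\<in>{p s..<p (Suc s)}. 0 < u l"
  shows "weighted_blk_dist p u v w s \<le> D \<longleftrightarrow>
    0 \<le> D \<and> (\<forall>l\<in>{p s..<p (Suc s)}. cmod (v $ l - w $ l) \<le> D * u l)"
  using assms unfolding weighted_blk_dist_def by (auto simp: divide_le_eq)

lemma weighted_blk_dist_cong:
  assumes "blk_vec p v s = blk_vec p v' s"
  shows "weighted_blk_dist p u v w s = weighted_blk_dist p u v' w s"
  unfolding weighted_blk_dist_def using blk_vec_eq_on_block[OF assms]
  by (metis (no_types, lifting) image_cong)

lemma weighted_blk_dist_blk_update:
  assumes part: "block_partition n m p" and A: "A \<in> carrier_mat n n" and G: "G \<in> carrier_mat n n"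
    and G_bd: "block_diagonal p m G" and s: "s < m" and G_ns: "invertible_mat (blk_mat p G s s)"
    and u: "\<forall>l<n. 0 < u l"
    and Gu: "\<forall>j<n. 0 < (\<Sum>l<n. comparison_mat G $$ (j,l) * u l)"
    and \<gamma>: "0 \<le> \<gamma>"
      "\<forall>j<n. (\<Sum>l<n. cmod ((G - A) $$ (j,l)) * u l) \<le> \<gamma> * (\<Sum>l<n. comparison_mat G $$ (j,l) * u l)"
    and xs: "xs \<in> carrier_vec n" and sol: "A *\<^sub>v xs = b"
    and dist: "\<forall>q<m. weighted_blk_dist p u (z q) xs q \<le> D"
    and v: "blk_vec p v s = blk_update p m A G b s z"
  shows "weighted_blk_dist p u v xs s \<le> \<gamma> * D"
proof -
  have u_blk: "\<forall>l\<in>{p q..<p (Suc q)}. 0 < u l" if "q < m" for q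
    using u block_partition_bound[OF part that] by auto
  have D: "0 \<le> D" using dist s weighted_blk_dist_nonneg order_trans by blast
  have err: "\<forall>q<m. \<forall>l\<in>{p q..<p (Suc q)}. cmod (z q $ l - xs $ l) \<le> D * u l"
  proof (intro allI impI)
    fix q assume "q < m"
    then show "\<forall>l\<in>{p q..<p (Suc q)}. cmod (z q $ l - xs $ l) \<le> D * u l"
      using dist weighted_blk_dist_le_iff[OF u_blk[OF \<open>q < m\<close>]] by blast
  qed
  have "cmod (v $ l - xs $ l) \<le> \<gamma> * D * u l" if l: "l \<in> {p s..<p (Suc s)}" for l
  proof -
    define i where "i = l - p s"
    have i: "i < blk_size p s" "l = p s + i" using l unfolding i_def blk_size_def by auto
    then have "v $ l = blk_update p m A G b s z $ i" using arg_cong[OF v, of "\<lambda>x. x $ i"] by simp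
    then show ?thesis
      using blk_update_contraction[OF part A G G_bd s G_ns u Gu \<gamma>(2) xs sol D err i(1)] i by simp
  qed
  then show ?thesis using weighted_blk_dist_le_iff[OF u_blk[OF s]] \<gamma>(1) D by simp
qed

section \<open>Asynchronous contraction\<close>

lemma eventually_le_after_updates:
  fixes a :: "nat \<Rightarrow> 'a :: preorder"
  assumes U: "infinite U" and update: "\<forall>t\<ge>N. t \<in> U \<longrightarrow> a (Suc t) \<le> E"
    and idle: "\<forall>t. t \<notin> U \<longrightarrow> a (Suc t) = a t"
  shows "eventually (\<lambda>t. a t \<le> E) sequentially"
proof -
  obtain t0 where t0: "t0 \<in> U" "N \<le> t0" using U infinite_nat_iff_unbounded_le by blast
  have "a t \<le> E" if "Suc t0 \<le> t" for t
    using that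
  proof (induction t rule: dec_induct)
    case base
    then show ?case using update t0 by blast
  next
    case (step t)
    then show ?case using update idle t0 by (cases "t \<in> U") auto
  qed
  then show ?thesis unfolding eventually_sequentially by blast
qed

text \<open>
  \<open>a k s\<close> and \<open>c k s\<close> stand for the errors of block \<open>s\<close> of the outer iterate
  \<open>x\<^sup>k\<close> and of the inner iterate \<open>y\<^sup>k\<close>.
\<close>

locale async_contraction =
  fixes m :: nat and \<Omega> :: "nat \<Rightarrow> nat set" and \<delta> :: "nat \<Rightarrow> nat \<Rightarrow> nat \<Rightarrow> nat"
    and \<gamma> :: real and a c :: "nat \<Rightarrow> nat \<Rightarrow> real"
  assumes updates_infinite: "\<forall>s<m. infinite {k. s \<in> \<Omega> k}"
    and delay_le: "\<forall>s<m. \<forall>q<m. \<forall>k. \<delta> s q k \<le> k"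
    and delay_tendsto: "\<forall>s<m. \<forall>q<m. filterlim (\<lambda>k. \<delta> s q k) at_top sequentially"
    and factor: "0 \<le> \<gamma>" "\<gamma> < 1"
    and a_nonneg: "\<And>k s. s < m \<Longrightarrow> 0 \<le> a k s"
    and c_step: "\<And>k s D. s < m \<Longrightarrow> \<forall>q<m. a (\<delta> s q k) q \<le> D \<Longrightarrow> c k s \<le> \<gamma> * D"
    and a_step: "\<And>k s D. s < m \<Longrightarrow> s \<in> \<Omega> k \<Longrightarrow> \<forall>q<m. c (\<delta> s q k) q \<le> D \<Longrightarrow> a (Suc k) s \<le> \<gamma> * D"
    and a_idle: "\<And>k s. s < m \<Longrightarrow> s \<notin> \<Omega> k \<Longrightarrow> a (Suc k) s = a k s"
begin

lemma eventually_delayed: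
  assumes "eventually P sequentially"
  shows "eventually (\<lambda>k. \<forall>s<m. \<forall>q<m. P (\<delta> s q k)) sequentially"
proof -
  have "eventually (\<lambda>k. P (\<delta> s q k)) sequentially" if "s < m" "q < m" for s q
    using delay_tendsto that assms by (simp add: filterlim_iff)
  then have "eventually (\<lambda>k. \<forall>s\<in>{..<m}. \<forall>q\<in>{..<m}. P (\<delta> s q k)) sequentially"
    by (auto intro!: eventually_ball_finite)
  then show ?thesis by (simp add: Ball_def)
qed

lemma factor_mult_le: "0 \<le> D \<Longrightarrow> \<gamma> * D \<le> D"
  using factor by (simp add: mult_left_le_one_le)

lemma errors_bounded:
  obtains C where "0 \<le> C" "\<And>k s. s < m \<Longrightarrow> a k s \<le> C"
proof -
  define C where "C = Max (insert 0 ((\<lambda>s. a 0 s) ` {..<m}))"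
  have C: "0 \<le> C" unfolding C_def by (intro Max_ge) auto
  have "\<forall>s<m. a k s \<le> C" for k
  proof (induction k rule: less_induct)
    case (less k)
    show ?case
    proof (cases k)
      case 0
      then show ?thesis unfolding C_def by (auto intro: Max_ge)
    next
      case (Suc t)
      have "c (\<delta> s q t) q \<le> C" if "s < m" "q < m" for s q
      proof -
        have "a (\<delta> q q' (\<delta> s q t)) q' \<le> C" if "q' < m" for q'
        proof -
          have "\<delta> q q' (\<delta> s q t) < k"
            using delay_le \<open>s < m\<close> \<open>q < m\<close> that Suc by (meson le_imp_less_Suc order_trans)
          then show ?thesis using less.IH that by blast
        qed
        then show ?thesis using c_step[OF \<open>q < m\<close>] factor_mult_le[OF C] by (meson order_trans)
      qed
      then show ?thesis
        using a_step a_idle less.IH[of t] Suc factor_mult_le[OF C] by (metis lessI order_trans)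
    qed
  qed
  then show ?thesis using that C by blast
qed

lemma eventually_contracts:
  assumes D: "0 \<le> D" and ev: "eventually (\<lambda>k. \<forall>s<m. a k s \<le> D) sequentially"
  shows "eventually (\<lambda>k. \<forall>s<m. a k s \<le> \<gamma> * D) sequentially"
proof -
  have "eventually (\<lambda>k. \<forall>s<m. c k s \<le> \<gamma> * D) sequentially"
    using eventually_delayed[OF ev] by eventually_elim (use c_step in blast)
  from eventually_delayed[OF this]
  have "eventually (\<lambda>k. \<forall>s<m. s \<in> \<Omega> k \<longrightarrow> a (Suc k) s \<le> \<gamma> * D) sequentially"
  proof eventually_elim
    case (elim k)
    have "a (Suc k) s \<le> \<gamma> * D" if "s < m" "s \<in> \<Omega> k" for s
      using a_step[OF that] elim that factor_mult_le[of "\<gamma> * D"] factor D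
      by (meson mult_nonneg_nonneg order_trans)
    then show ?case by blast
  qed
  then obtain N where N: "\<forall>t\<ge>N. \<forall>s<m. s \<in> \<Omega> t \<longrightarrow> a (Suc t) s \<le> \<gamma> * D"
    unfolding eventually_sequentially by blast
  have "eventually (\<lambda>k. a k s \<le> \<gamma> * D) sequentially" if "s < m" for s
    using that N updates_infinite a_idle
    by (intro eventually_le_after_updates[of "{k. s \<in> \<Omega> k}" N]) auto
  then have "eventually (\<lambda>k. \<forall>s\<in>{..<m}. a k s \<le> \<gamma> * D) sequentially"
    by (intro eventually_ball_finite) auto
  then show ?thesis by (simp add: Ball_def)
qed

lemma errors_tendsto_zero:
  assumes s: "s < m"
  shows "(\<lambda>k. a k s) \<longlonglongrightarrow> 0"
proof -
  obtain C where C: "0 \<le> C" "\<And>k s. s < m \<Longrightarrow> a k s \<le> C" using errors_bounded by blast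
  have ev: "eventually (\<lambda>k. \<forall>s<m. a k s \<le> \<gamma> ^ j * C) sequentially" for j
  proof (induction j)
    case 0
    then show ?case using C by simp
  next
    case (Suc j)
    then show ?case
      using eventually_contracts[of "\<gamma> ^ j * C"] factor C by (simp add: mult.assoc)
  qed
  show ?thesis
  proof (rule order_tendstoI)
    fix \<epsilon> :: real assume "\<epsilon> < 0"
    then show "eventually (\<lambda>k. \<epsilon> < a k s) sequentially"
      using a_nonneg[OF s] by (simp add: order.strict_trans2)
  next
    fix \<epsilon> :: real assume "0 < \<epsilon>"
    have "(\<lambda>j. \<gamma> ^ j * C) \<longlonglongrightarrow> 0"
      using factor by (intro tendsto_mult_left_zero LIMSEQ_power_zero) simp
    from order_tendstoD(2)[OF this \<open>0 < \<epsilon>\<close>] obtain j where j: "\<gamma> ^ j * C < \<epsilon>"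
      unfolding eventually_sequentially by blast
    from ev[of j] show "eventually (\<lambda>k. a k s < \<epsilon>) sequentially"
      by eventually_elim (use s j in fastforce)
  qed
qed

end

theorem async_two_stage_tendsto:
  fixes A M F :: "complex mat" and x y :: "nat \<Rightarrow> complex vec"
  assumes part: "block_partition n m p" and A: "A \<in> carrier_mat n n"
    and M: "M \<in> carrier_mat n n" and F: "F \<in> carrier_mat n n"
    and M_bd: "block_diagonal p m M" and F_bd: "block_diagonal p m F"
    and M_blk_ns: "\<forall>s<m. invertible_mat (blk_mat p M s s)"
    and F_blk_ns: "\<forall>s<m. invertible_mat (blk_mat p F s s)"
    and \<Omega>_inf: "\<forall>s<m. infinite {k. s \<in> \<Omega> k}"
    and \<delta>_le: "\<forall>s<m. \<forall>q<m. \<forall>k. \<delta> s q k \<le> k"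
    and \<delta>_lim: "\<forall>s<m. \<forall>q<m. filterlim (\<lambda>k. \<delta> s q k) at_top sequentially"
    and y_def: "\<forall>k. \<forall>s<m. blk_vec p (y k) s = blk_update p m A M b s (\<lambda>q. x (\<delta> s q k))"
    and x_def: "\<forall>k. \<forall>s<m. blk_vec p (x (Suc k)) s =
      (if s \<in> \<Omega> k then blk_update p m A F b s (\<lambda>q. y (\<delta> s q k)) else blk_vec p (x k) s)"
    and u: "\<forall>l<n. 0 < u l"
    and Mu: "\<forall>j<n. 0 < (\<Sum>l<n. comparison_mat M $$ (j,l) * u l)"
    and Fu: "\<forall>j<n. 0 < (\<Sum>l<n. comparison_mat F $$ (j,l) * u l)"
    and \<gamma>: "0 \<le> \<gamma>" "\<gamma> < 1"
    and M_contr: "\<forall>j<n. (\<Sum>l<n. cmod ((M - A) $$ (j,l)) * u l) \<le> \<gamma> * (\<Sum>l<n. comparison_mat M $$ (j,l) * u l)"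
    and F_contr: "\<forall>j<n. (\<Sum>l<n. cmod ((F - A) $$ (j,l)) * u l) \<le> \<gamma> * (\<Sum>l<n. comparison_mat F $$ (j,l) * u l)"
    and xs: "xs \<in> carrier_vec n" and sol: "A *\<^sub>v xs = b"
    and i: "i < n"
  shows "(\<lambda>k. x k $ i) \<longlonglongrightarrow> xs $ i"
proof -
  define a where "a k s = weighted_blk_dist p u (x k) xs s" for k s
  define c where "c k s = weighted_blk_dist p u (y k) xs s" for k s
  interpret async_contraction m \<Omega> \<delta> \<gamma> a c
  proof
    show "c k s \<le> \<gamma> * D" if "s < m" "\<forall>q<m. a (\<delta> s q k) q \<le> D" for k s D
      using weighted_blk_dist_blk_update[OF part A M M_bd that(1) _ u Mu \<gamma>(1) M_contr xs sol,
          of "\<lambda>q. x (\<delta> s q k)" D "y k"] M_blk_ns y_def that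
      unfolding a_def c_def by blast
    show "a (Suc k) s \<le> \<gamma> * D" if "s < m" "s \<in> \<Omega> k" "\<forall>q<m. c (\<delta> s q k) q \<le> D" for k s D
      using weighted_blk_dist_blk_update[OF part A F F_bd that(1) _ u Fu \<gamma>(1) F_contr xs sol,
          of "\<lambda>q. y (\<delta> s q k)" D "x (Suc k)"] F_blk_ns x_def that
      unfolding a_def c_def by auto
    show "a (Suc k) s = a k s" if "s < m" "s \<notin> \<Omega> k" for k s
      unfolding a_def by (rule weighted_blk_dist_cong) (use x_def that in simp)
  qed (use \<Omega>_inf \<delta>_le \<delta>_lim \<gamma> in \<open>auto simp: a_def weighted_blk_dist_nonneg\<close>)
  obtain s where s: "s < m" "p s \<le> i" "i < p (Suc s)" using block_partition_cover[OF part i] .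
  have bound: "cmod (x k $ i - xs $ i) \<le> a k s * u i" for k
    using weighted_blk_dist_le_iff[of p s u "x k" xs "a k s"] u block_partition_bound[OF part s(1)] s
    unfolding a_def by auto
  have "(\<lambda>k. a k s * u i) \<longlonglongrightarrow> 0"
    using errors_tendsto_zero[OF s(1)] by (rule tendsto_mult_left_zero)
  then have "(\<lambda>k. cmod (x k $ i - xs $ i)) \<longlonglongrightarrow> 0"
    by (rule tendsto_sandwich[rotated 3]) (auto simp: bound)
  then show ?thesis by (rule LIM_zero_cancel[OF tendsto_norm_zero_cancel])
qed

theorem corollary2:
  fixes n m :: nat and p :: "nat \<Rightarrow> nat"
    and A M F :: "complex mat" and b :: "complex vec"
    and \<Omega> :: "nat \<Rightarrow> nat set" and \<delta> :: "nat \<Rightarrow> nat \<Rightarrow> nat \<Rightarrow> nat"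
    and x y :: "nat \<Rightarrow> complex vec"
  assumes A: "A \<in> carrier_mat n n" and b: "b \<in> carrier_vec n"
    and M: "M \<in> carrier_mat n n" and F: "F \<in> carrier_mat n n"
    and M_ns: "invertible_mat M" and F_ns: "invertible_mat F"
    and part: "block_partition n m p"
    and M_bd: "block_diagonal p m M" and F_bd: "block_diagonal p m F"
    and M_blk_ns: "\<forall>s<m. invertible_mat (blk_mat p M s s)"
    and F_blk_ns: "\<forall>s<m. invertible_mat (blk_mat p F s s)"
    and \<Omega>_sub: "\<forall>k. \<Omega> k \<subseteq> {..<m}"
    and \<Omega>_inf: "\<forall>s<m. infinite {k. s \<in> \<Omega> k}"
    and \<delta>_le: "\<forall>s<m. \<forall>q<m. \<forall>k. \<delta> s q k \<le> k"
    and \<delta>_lim: "\<forall>s<m. \<forall>q<m. filterlim (\<lambda>k. \<delta> s q k) at_top sequentially"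
    and x0: "x 0 \<in> carrier_vec n"
    and x_dim: "\<forall>k. x (Suc k) \<in> carrier_vec n"
    and y_dim: "\<forall>k. y k \<in> carrier_vec n"
    and y_def: "\<forall>k. \<forall>s<m. blk_vec p (y k) s =
        blk_vec p (x (\<delta> s s k)) s +
        inv_mat (blk_mat p M s s) *\<^sub>v
          (blk_vec p b s - blk_row_sum p m A s (\<lambda>q. blk_vec p (x (\<delta> s q k)) q))"
    and x_def: "\<forall>k. \<forall>s<m. blk_vec p (x (Suc k)) s =
        (if s \<in> \<Omega> k then
           blk_vec p (y (\<delta> s s k)) s +
           inv_mat (blk_mat p F s s) *\<^sub>v
             (blk_vec p b s - blk_row_sum p m A s (\<lambda>q. blk_vec p (y (\<delta> s q k)) q))
         else blk_vec p (x k) s)"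
    and H: "H_matrix A"
    and condM: "comparison_mat M - abs_mat (M - A) = comparison_mat A"
    and condF: "comparison_mat F - abs_mat (F - A) = comparison_mat A"
  shows "(\<exists>xs \<in> carrier_vec n. A *\<^sub>v xs = b) \<and>
         (\<forall>xs \<in> carrier_vec n. A *\<^sub>v xs = b \<longrightarrow>
            (\<forall>i<n. (\<lambda>k. x k $ i) \<longlonglongrightarrow> xs $ i))"
proof -
  obtain u where u: "\<forall>i<n. 0 < u i" and Au: "\<forall>i<n. 0 < (\<Sum>j<n. comparison_mat A $$ (i,j) * u j)"
    using M_matrix_pos_vector[OF comparison_mat_carrier[OF A]] H unfolding H_matrix_def by blast
  obtain \<gamma>M where \<gamma>M: "0 \<le> \<gamma>M" "\<gamma>M < 1" and Mu: "\<forall>j<n. 0 < (\<Sum>l<n. comparison_mat M $$ (j,l) * u l)"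
    and M_contr: "\<forall>j<n. (\<Sum>l<n. cmod ((M - A) $$ (j,l)) * u l) \<le> \<gamma>M * (\<Sum>l<n. comparison_mat M $$ (j,l) * u l)"
    using splitting_contraction_factor[OF A M condM u Au] by blast
  obtain \<gamma>F where \<gamma>F: "0 \<le> \<gamma>F" "\<gamma>F < 1" and Fu: "\<forall>j<n. 0 < (\<Sum>l<n. comparison_mat F $$ (j,l) * u l)"
    and F_contr: "\<forall>j<n. (\<Sum>l<n. cmod ((F - A) $$ (j,l)) * u l) \<le> \<gamma>F * (\<Sum>l<n. comparison_mat F $$ (j,l) * u l)"
    using splitting_contraction_factor[OF A F condF u Au] by blast
  define \<gamma> where "\<gamma> = max \<gamma>M \<gamma>F"
  have M_contr': "\<forall>j<n. (\<Sum>l<n. cmod ((M - A) $$ (j,l)) * u l) \<le> \<gamma> * (\<Sum>l<n. comparison_mat M $$ (j,l) * u l)"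
    using M_contr Mu unfolding \<gamma>_def by (meson less_imp_le max.cobounded1 mult_right_mono order_trans)
  have F_contr': "\<forall>j<n. (\<Sum>l<n. cmod ((F - A) $$ (j,l)) * u l) \<le> \<gamma> * (\<Sum>l<n. comparison_mat F $$ (j,l) * u l)"
    using F_contr Fu unfolding \<gamma>_def by (meson less_imp_le max.cobounded2 mult_right_mono order_trans)
  have "\<exists>xs \<in> carrier_vec n. A *\<^sub>v xs = b"
    using det_nonzero_imp_solvable[OF A comparison_mat_pos_vector_imp_det_nonzero[OF A u Au] b] .
  moreover have "(\<lambda>k. x k $ i) \<longlonglongrightarrow> xs $ i" if "xs \<in> carrier_vec n" "A *\<^sub>v xs = b" "i < n" for xs i
    using async_two_stage_tendsto[OF part A M F M_bd F_bd M_blk_ns F_blk_ns \<Omega>_inf \<delta>_le \<delta>_lim _ _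
        u Mu Fu _ _ M_contr' F_contr' that] y_def x_def \<gamma>M \<gamma>F
    unfolding blk_update_def \<gamma>_def by simp
  ultimately show ?thesis by blast
qed

end
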